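(* Let $\beta\in(3/2,\beta^*]$, let $\vec z\in S_\beta$ and let $\vec z=\sum_{i=1}^\infty a_i\beta^{-i}$ with $a_i\in\{\vec q_0,\vec q_1,\vec q_2\}$ be any representation of $\vec z$ in base $\beta$. Then there exists $\omega\in\Omega$ such that $a_i=d_i(\omega,\vec z)$ for all $i\ge1$.
   Context: $\beta^*\approx1.5437$ is the real root of $x^3-2x^2+2x=2$. $\vec q_0=(0,0)$, $\vec q_1=(1,0)$, $\vec q_2=(0,1)$, $f_i(\vec z)=(\vec z+\vec q_i)/\beta$, $S_\beta$ the attractor of this IFS. $H=\{(x,y):x<\frac1\beta,\ y<\frac1\beta,\ x+y>\frac{1}{\beta(\beta-1)}\}$; $\tilde E_0=([0,\frac1\beta)\times[0,\frac1\beta))\setminus H$; $\tilde E_1=\{0\le y<\frac1\beta,\ \frac{1}{\beta(\beta-1)}<x+y\le\frac1{\beta-1}\}\setminus H$; $\tilde E_2=\{0\le x<\frac1\beta,\ \frac{1}{\beta(\beta-1)}<x+y\le\frac1{\beta-1}\}\setminus H$; $\tilde C_{01}=\{x\ge\frac1\beta,\ y\ge0,\ x+y\le\frac{1}{\beta(\beta-1)}\}$; $\tilde C_{12}=\{x\ge\frac1\beta,\ y\ge\frac1\beta,\ x+y\le\frac1{\beta-1}\}$; $\tilde C_{02}=\{x\ge0,\ y\ge\frac1\beta,\ x+y\le\frac{1}{\beta(\beta-1)}\}$. For $\{i,j,k\}=\{0,1,2\}$, $E_i=\bigl(\tilde E_i\cup\bigcup_{n\ge1}f_jf_i^n(H)\cup\bigcup_{n\ge1}f_kf_i^n(H)\bigr)\setminus\bigcup_{n\ge0}f_i^n(H)$;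 for $ij\in\{01,12,02\}$, $C_{ij}=\tilde C_{ij}\setminus\bigl(\bigcup_{n\ge1}f_if_j^n(H)\cup\bigcup_{n\ge1}f_jf_i^n(H)\bigr)$. $\Omega=\{0,1\}^{\mathbb N}$ with left shift $\sigma$. $K_\beta:\Omega\times S_\beta\to\Omega\times S_\beta$: $K_\beta(\omega,\vec z)=(\omega,\beta\vec z-\vec q_i)$ if $\vec z\in E_i$; $(\sigma\omega,\beta\vec z-\vec q_i)$ if $\omega_1=0$, $\vec z\in C_{ij}$; $(\sigma\omega,\beta\vec z-\vec q_j)$ if $\omega_1=1$, $\vec z\in C_{ij}$. The digit $d_1(\omega,\vec z)$ is the vector subtracted, $d_n=d_1\circ K_\beta^{n-1}$. *)

theory Defs
  imports "HOL-Analysis.Analysis"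
begin

type_synonym pt = "real \<times> real"

text \<open>beta star: the real root of x^3 - 2x^2 + 2x = 2 (unique, since the cubic is strictly increasing).\<close>
definition beta_star :: real where
  "beta_star = (THE x::real. x ^ 3 - 2 * x ^ 2 + 2 * x = 2)"

definition qv :: "nat \<Rightarrow> pt" where
  "qv i = (if i = 1 then (1, 0) else if i = 2 then (0, 1) else (0, 0))"

definition fmap :: "real \<Rightarrow> nat \<Rightarrow> pt \<Rightarrow> pt" where
  "fmap \<beta> i z = (1 / \<beta>) *\<^sub>R (z + qv i)"

definition Sbeta :: "real \<Rightarrow> pt set" where
  "Sbeta \<beta> = (THE S. compact S \<and> S \<noteq> {} \<and> S = (\<Union>i\<in>{0,1,2}. fmap \<beta> i ` S))"

definition Hset :: "real \<Rightarrow> pt set" where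
  "Hset \<beta> = {(x, y). x < 1 / \<beta> \<and> y < 1 / \<beta> \<and> x + y > 1 / (\<beta> * (\<beta> - 1))}"

definition Et :: "real \<Rightarrow> nat \<Rightarrow> pt set" where
  "Et \<beta> i =
    (if i = 0 then {(x, y). 0 \<le> x \<and> x < 1 / \<beta> \<and> 0 \<le> y \<and> y < 1 / \<beta>}
     else if i = 1 then {(x, y). 0 \<le> y \<and> y < 1 / \<beta> \<and> 1 / (\<beta> * (\<beta> - 1)) < x + y \<and> x + y \<le> 1 / (\<beta> - 1)}
     else {(x, y). 0 \<le> x \<and> x < 1 / \<beta> \<and> 1 / (\<beta> * (\<beta> - 1)) < x + y \<and> x + y \<le> 1 / (\<beta> - 1)})
    - Hset \<beta>"

definition Ct :: "real \<Rightarrow> nat \<Rightarrow> nat \<Rightarrow> pt set" where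
  "Ct \<beta> i j =
    (if (i, j) = (0, 1) then {(x, y). x \<ge> 1 / \<beta> \<and> y \<ge> 0 \<and> x + y \<le> 1 / (\<beta> * (\<beta> - 1))}
     else if (i, j) = (1, 2) then {(x, y). x \<ge> 1 / \<beta> \<and> y \<ge> 1 / \<beta> \<and> x + y \<le> 1 / (\<beta> - 1)}
     else {(x, y). x \<ge> 0 \<and> y \<ge> 1 / \<beta> \<and> x + y \<le> 1 / (\<beta> * (\<beta> - 1))})"

definition Eset :: "real \<Rightarrow> nat \<Rightarrow> pt set" where
  "Eset \<beta> i =
    (Et \<beta> i \<union> (\<Union>j\<in>{0,1,2} - {i}. \<Union>n\<in>{1..}. fmap \<beta> j ` ((fmap \<beta> i ^^ n) ` Hset \<beta>)))
    - (\<Union>n. (fmap \<beta> i ^^ n) ` Hset \<beta>)"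

definition Cset :: "real \<Rightarrow> nat \<Rightarrow> nat \<Rightarrow> pt set" where
  "Cset \<beta> i j =
    Ct \<beta> i j - (\<Union>n\<in>{1..}. fmap \<beta> i ` ((fmap \<beta> j ^^ n) ` Hset \<beta>)
                      \<union> fmap \<beta> j ` ((fmap \<beta> i ^^ n) ` Hset \<beta>))"

text \<open>Omega = {0,1}^N encoded as nat => bool (True = 1), omega_1 is omega 0; left shift.\<close>
definition shift :: "(nat \<Rightarrow> bool) \<Rightarrow> (nat \<Rightarrow> bool)" where
  "shift \<omega> = (\<lambda>n. \<omega> (Suc n))"

text \<open>One step of K_beta, returning the digit d_1 and the new state.
  Outside the union of the pieces (where K_beta is not defined in the paper) an arbitrary
  default is used.\<close>
definition Kstep :: "real \<Rightarrow> (nat \<Rightarrow> bool) \<times> pt \<Rightarrow> pt \<times> ((nat \<Rightarrow> bool) \<times> pt)" where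
  "Kstep \<beta> s = (case s of (\<omega>, z) \<Rightarrow>
     if z \<in> Eset \<beta> 0 then (qv 0, \<omega>, \<beta> *\<^sub>R z - qv 0)
     else if z \<in> Eset \<beta> 1 then (qv 1, \<omega>, \<beta> *\<^sub>R z - qv 1)
     else if z \<in> Eset \<beta> 2 then (qv 2, \<omega>, \<beta> *\<^sub>R z - qv 2)
     else if z \<in> Cset \<beta> 0 1 then
       (let d = qv (if \<omega> 0 then 1 else 0) in (d, shift \<omega>, \<beta> *\<^sub>R z - d))
     else if z \<in> Cset \<beta> 1 2 then
       (let d = qv (if \<omega> 0 then 2 else 1) in (d, shift \<omega>, \<beta> *\<^sub>R z - d))
     else if z \<in> Cset \<beta> 0 2 then
       (let d = qv (if \<omega> 0 then 2 else 0) in (d, shift \<omega>, \<beta> *\<^sub>R z - d))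
     else (qv 0, \<omega>, z))"

definition Kbeta :: "real \<Rightarrow> (nat \<Rightarrow> bool) \<times> pt \<Rightarrow> (nat \<Rightarrow> bool) \<times> pt" where
  "Kbeta \<beta> s = snd (Kstep \<beta> s)"

definition digit :: "real \<Rightarrow> nat \<Rightarrow> (nat \<Rightarrow> bool) \<Rightarrow> pt \<Rightarrow> pt" where
  "digit \<beta> n \<omega> z = fst (Kstep \<beta> ((Kbeta \<beta> ^^ (n - 1)) (\<omega>, z)))"

end

theory Submission
  imports Defs
begin

(*
  Let z_n be the tail of the given expansion after n digits, so z_(n-1) = f_d(z_n) where
  q_d = a_n, and every tail again has an expansion. A point f_d(s), where s has an expansion,
  lies in the cell f_d(T) of the triangle T containing all such points, and never in an orbit
  f_i^n(H): that orbit stays in a region which f_i maps into itself and which, for i <> d,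
  every f_k with k <> d maps away from f_d(T). Hence f_d(s) lies in E_d and in no other E_j,
  or in a switch region C_ij with d in {i, j}. In the first case K_beta subtracts q_d whatever
  omega is; in the second it does so exactly when the next bit of omega selects d. Each visit
  to a switch region consumes one bit, so omega is obtained by writing the required choice at
  the position that counts the earlier switch visits.
*)

lemma qv_simps [simp]: "qv 0 = (0, 0)" "qv 1 = (1, 0)" "qv (Suc 0) = (1, 0)" "qv 2 = (0, 1)"
  by (simp_all add: qv_def)

lemma fmap_inj: "\<beta> \<noteq> 0 \<Longrightarrow> inj (fmap \<beta> d)"
  by (auto simp: fmap_def intro: injI)

lemma scaleR_fmap_minus_qv: "\<beta> \<noteq> 0 \<Longrightarrow> \<beta> *\<^sub>R fmap \<beta> d s - qv d = s"
  by (simp add: fmap_def)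

lemma norm_scaleR_qv_le: "0 \<le> c \<Longrightarrow> norm (c *\<^sub>R qv k) \<le> c"
  by (simp add: qv_def)

definition expansion :: "real \<Rightarrow> (nat \<Rightarrow> nat) \<Rightarrow> pt" where
  "expansion \<beta> d = (\<Sum>i. (1 / \<beta>) ^ Suc i *\<^sub>R qv (d i))"

definition expansions :: "real \<Rightarrow> pt set" where
  "expansions \<beta> = {expansion \<beta> d | d. \<forall>i. d i \<le> 2}"

definition attractor_triangle :: "real \<Rightarrow> pt set" where
  "attractor_triangle \<beta> = {(x, y). 0 \<le> x \<and> 0 \<le> y \<and> x + y \<le> 1 / (\<beta> - 1)}"

lemma inverse_powers_sums:
  fixes \<beta> :: real
  assumes "\<beta> > 1"
  shows "(\<lambda>i. (1 / \<beta>) ^ Suc i) sums (1 / (\<beta> - 1))"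
proof -
  have "(\<lambda>i. (1 / \<beta>) * (1 / \<beta>) ^ i) sums ((1 / \<beta>) * (1 / (1 - 1 / \<beta>)))"
    by (rule sums_mult, rule geometric_sums) (use assms in simp)
  moreover have "(1 / \<beta>) * (1 / (1 - 1 / \<beta>)) = 1 / (\<beta> - 1)"
    using assms by (simp add: field_simps)
  ultimately show ?thesis
    by simp
qed

lemma expansion_sums:
  assumes "\<beta> > 1"
  shows "(\<lambda>i. (1 / \<beta>) ^ Suc i *\<^sub>R qv (d i)) sums expansion \<beta> d"
proof -
  have "summable (\<lambda>i. (1 / \<beta>) ^ Suc i)"
    using inverse_powers_sums[OF assms] by (rule sums_summable)
  moreover have "norm ((1 / \<beta>) ^ Suc i *\<^sub>R qv (d i)) \<le> (1 / \<beta>) ^ Suc i" for i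
    using assms by (intro norm_scaleR_qv_le zero_le_power) simp
  ultimately have "summable (\<lambda>i. (1 / \<beta>) ^ Suc i *\<^sub>R qv (d i))"
    by (rule summable_comparison_test')
  then show ?thesis
    unfolding expansion_def by (rule summable_sums)
qed

lemma expansion_Suc:
  assumes "\<beta> > 1"
  shows "expansion \<beta> d = fmap \<beta> (d 0) (expansion \<beta> (\<lambda>i. d (Suc i)))"
proof -
  let ?t = "\<lambda>i. (1 / \<beta>) ^ Suc i *\<^sub>R qv (d i)"
  have "(\<lambda>i. ?t (Suc i)) sums (expansion \<beta> d - ?t 0)"
    using sums_Suc_iff[of ?t "expansion \<beta> d - ?t 0"] expansion_sums[OF assms, of d]
    by (simp only: diff_add_cancel)
  from sums_scaleR_right[OF this, of \<beta>]
  have "(\<lambda>i. (1 / \<beta>) ^ Suc i *\<^sub>R qv (d (Suc i))) sums (\<beta> *\<^sub>R expansion \<beta> d - qv (d 0))"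
    using assms by (simp add: scaleR_right_diff_distrib)
  then have "expansion \<beta> (\<lambda>i. d (Suc i)) = \<beta> *\<^sub>R expansion \<beta> d - qv (d 0)"
    by (rule sums_unique2[OF expansion_sums[OF assms]])
  then show ?thesis
    using assms by (simp add: fmap_def)
qed

lemma fmap_expansions:
  assumes "\<beta> > 1" "d \<le> 2" "s \<in> expansions \<beta>"
  shows "fmap \<beta> d s \<in> expansions \<beta>"
proof -
  obtain e where e: "\<forall>i. e i \<le> 2" "s = expansion \<beta> e"
    using assms(3) by (auto simp: expansions_def)
  have "fmap \<beta> d s = expansion \<beta> (case_nat d e)"
    using expansion_Suc[OF assms(1), of "case_nat d e"] e by simp
  moreover have "\<forall>i. case_nat d e i \<le> 2"
    using assms(2) e by (simp split: nat.split)
  ultimately show ?thesis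
    unfolding expansions_def by blast
qed

lemma expansions_cases:
  assumes "\<beta> > 1" "p \<in> expansions \<beta>"
  obtains d s where "d \<le> 2" "s \<in> expansions \<beta>" "p = fmap \<beta> d s"
proof -
  obtain e where e: "\<forall>i. e i \<le> 2" "p = expansion \<beta> e"
    using assms(2) by (auto simp: expansions_def)
  have "expansion \<beta> (\<lambda>i. e (Suc i)) \<in> expansions \<beta>"
    using e(1) by (auto simp: expansions_def)
  then show ?thesis
    using that e expansion_Suc[OF assms(1), of e] by blast
qed

lemma expansions_subset_attractor_triangle:
  assumes "\<beta> > 1"
  shows "expansions \<beta> \<subseteq> attractor_triangle \<beta>"
proof
  fix p assume "p \<in> expansions \<beta>"
  then obtain d where d: "p = expansion \<beta> d"
    by (auto simp: expansions_def)
  let ?w = "\<lambda>i. (1 / \<beta>) ^ Suc i :: real"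
  have S: "(\<lambda>i. ?w i *\<^sub>R qv (d i)) sums p"
    using expansion_sums[OF assms] d by simp
  have x: "(\<lambda>i. ?w i * fst (qv (d i))) sums fst p"
    using bounded_linear.sums[OF bounded_linear_fst S] by simp
  have y: "(\<lambda>i. ?w i * snd (qv (d i))) sums snd p"
    using bounded_linear.sums[OF bounded_linear_snd S] by simp
  have "0 \<le> fst p" "0 \<le> snd p"
    using sums_le[OF _ sums_zero x] sums_le[OF _ sums_zero y] assms by (auto simp: qv_def)
  moreover have "fst p + snd p \<le> 1 / (\<beta> - 1)"
    by (rule sums_le[OF _ sums_add[OF x y] inverse_powers_sums[OF assms]]) (use assms in \<open>auto simp: qv_def\<close>)
  ultimately show "p \<in> attractor_triangle \<beta>"
    unfolding attractor_triangle_def by (simp add: case_prod_beta)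
qed

definition cell :: "real \<Rightarrow> nat \<Rightarrow> pt set" where
  "cell \<beta> d =
    (if d = 0 then {(x, y). 0 \<le> x \<and> 0 \<le> y \<and> x + y \<le> 1 / (\<beta> * (\<beta> - 1))}
     else if d = 1 then {(x, y). 1 / \<beta> \<le> x \<and> 0 \<le> y \<and> x + y \<le> 1 / (\<beta> - 1)}
     else {(x, y). 0 \<le> x \<and> 1 / \<beta> \<le> y \<and> x + y \<le> 1 / (\<beta> - 1)})"

definition hole_basin :: "real \<Rightarrow> nat \<Rightarrow> pt set" where
  "hole_basin \<beta> i =
    (if i = 0 then {(x, y). x < 1 / \<beta> \<and> y < 1 / \<beta>}
     else if i = 1 then {(x, y). y < 1 / \<beta> \<and> 1 / (\<beta> * (\<beta> - 1)) < x + y}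
     else {(x, y). x < 1 / \<beta> \<and> 1 / (\<beta> * (\<beta> - 1)) < x + y})"

lemma le_2_cases: "(d::nat) \<le> 2 \<Longrightarrow> d = 0 \<or> d = 1 \<or> d = 2"
  by auto

lemma fmap_Pair: "fmap \<beta> d (x, y) = ((x + fst (qv d)) / \<beta>, (y + snd (qv d)) / \<beta>)"
  by (cases "qv d") (simp add: fmap_def field_simps)

lemma hole_basin_bounds:
  fixes \<beta> t u v :: real
  assumes "\<beta> > 1"
  shows "t < 1 / \<beta> \<Longrightarrow> t / \<beta> < 1 / \<beta>"
    and "1 / (\<beta> * (\<beta> - 1)) < u + v \<Longrightarrow> 1 / (\<beta> * (\<beta> - 1)) < (u + 1) / \<beta> + v / \<beta>"
proof -
  have "1 / \<beta> < 1"
    using assms by simp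
  show "t / \<beta> < 1 / \<beta>" if "t < 1 / \<beta>"
  proof -
    have "t < 1"
      using that \<open>1 / \<beta> < 1\<close> by linarith
    then show ?thesis
      using assms divide_strict_right_mono[of t 1 \<beta>] by simp
  qed
  show "1 / (\<beta> * (\<beta> - 1)) < (u + 1) / \<beta> + v / \<beta>" if "1 / (\<beta> * (\<beta> - 1)) < u + v"
  proof -
    have "\<beta> * (1 / (\<beta> * (\<beta> - 1))) = 1 / (\<beta> * (\<beta> - 1)) + 1 / \<beta>"
      using assms by (simp add: field_simps)
    also have "\<dots> < u + 1 + v"
      using that \<open>1 / \<beta> < 1\<close> by linarith
    finally show ?thesis
      using assms by (simp add: pos_less_divide_eq add_divide_distrib[symmetric] mult.commute)
  qed
qed

lemma fmap_mem_cell: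
  assumes "\<beta> > 1" "d \<le> 2" "s \<in> attractor_triangle \<beta>"
  shows "fmap \<beta> d s \<in> cell \<beta> d"
proof -
  obtain x y where s: "s = (x, y)" "0 \<le> x" "0 \<le> y" "x + y \<le> 1 / (\<beta> - 1)"
    using assms(3) by (auto simp: attractor_triangle_def)
  have "(x + y) / \<beta> \<le> 1 / (\<beta> * (\<beta> - 1))" "(x + y + 1) / \<beta> \<le> 1 / (\<beta> - 1)"
    using divide_right_mono[OF s(4), of \<beta>] divide_right_mono[of "x + y + 1" "1 / (\<beta> - 1) + 1" \<beta>]
      s(4) assms(1) by (simp_all add: field_simps)
  then show ?thesis
    using le_2_cases[OF assms(2)] s assms(1)
    by (auto simp: cell_def fmap_Pair qv_def add_divide_distrib[symmetric] add_ac
        intro: divide_right_mono)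
qed

lemma Hset_subset_hole_basin: "Hset \<beta> \<subseteq> hole_basin \<beta> i"
  by (auto simp: Hset_def hole_basin_def)

lemma fmap_hole_basin:
  assumes "\<beta> > 1" "i \<le> 2" "p \<in> hole_basin \<beta> i"
  shows "fmap \<beta> i p \<in> hole_basin \<beta> i"
proof -
  obtain x y where p: "p = (x, y)"
    by fastforce
  note bounds = hole_basin_bounds[OF assms(1)]
  consider "i = 0" | "i = 1" | "i = 2"
    using assms(2) by linarith
  then show ?thesis
  proof cases
    case 1
    then show ?thesis
      using assms(3) bounds(1)[of x] bounds(1)[of y] by (simp add: p hole_basin_def fmap_Pair)
  next
    case 2
    then show ?thesis
      using assms(3) bounds(1)[of y] bounds(2)[of x y] by (simp add: p hole_basin_def fmap_Pair)
  next
    case 3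
    then show ?thesis
      using assms(3) bounds(1)[of x] bounds(2)[of y x] by (simp add: p hole_basin_def fmap_Pair add.commute)
  qed
qed

lemma funpow_fmap_hole_basin:
  assumes "\<beta> > 1" "i \<le> 2" "p \<in> hole_basin \<beta> i"
  shows "(fmap \<beta> i ^^ n) p \<in> hole_basin \<beta> i"
  by (induction n) (simp_all add: assms fmap_hole_basin)

lemma cell_Int_Hset: "cell \<beta> d \<inter> Hset \<beta> = {}"
  unfolding cell_def Hset_def by (auto split: if_splits)

lemma fmap_hole_basin_notin_cell:
  assumes "\<beta> > 1" "i \<le> 2" "d \<le> 2" "k \<le> 2" "i \<noteq> d" "k \<noteq> d" "h \<in> hole_basin \<beta> i"
  shows "fmap \<beta> k h \<notin> cell \<beta> d"
proof -
  obtain x y where h: "h = (x, y)"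
    by fastforce
  note bounds = hole_basin_bounds[OF assms(1)]
  consider "d = 0" | "d = 1" | "d = 2"
    using assms(3) by linarith
  then show ?thesis
  proof cases
    case 1
    then have "k = 1 \<or> k = 2" "1 / (\<beta> * (\<beta> - 1)) < x + y"
      using assms(2,4-7) by (auto simp: h hole_basin_def split: if_splits)
    then show ?thesis
      using 1 bounds(2)[of x y] bounds(2)[of y x]
      by (auto simp: h cell_def fmap_Pair add.commute)
  next
    case 2
    then have "k = 0 \<or> k = 2" "x < 1 / \<beta>"
      using assms(2,4-7) by (auto simp: h hole_basin_def split: if_splits)
    then show ?thesis
      using 2 bounds(1)[of x] by (auto simp: h cell_def fmap_Pair)
  next
    case 3
    then have "k = 0 \<or> k = 1" "y < 1 / \<beta>"
      using assms(2,4-7) by (auto simp: h hole_basin_def split: if_splits)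
    then show ?thesis
      using 3 bounds(1)[of y] by (auto simp: h cell_def fmap_Pair)
  qed
qed

lemma fmap_expansion_mem_cell:
  assumes "\<beta> > 1" "d \<le> 2" "s \<in> expansions \<beta>"
  shows "fmap \<beta> d s \<in> cell \<beta> d"
  using fmap_mem_cell[OF assms(1,2)] expansions_subset_attractor_triangle[OF assms(1)] assms(3)
  by blast

lemma expansions_notin_Hset_orbit:
  assumes "\<beta> > 1" "i \<le> 2" "p \<in> expansions \<beta>"
  shows "p \<notin> (fmap \<beta> i ^^ n) ` Hset \<beta>"
  using assms(3)
proof (induction n arbitrary: p)
  case 0
  obtain d s where ds: "d \<le> 2" "s \<in> expansions \<beta>" "p = fmap \<beta> d s"
    using expansions_cases[OF assms(1) "0.prems"] .
  then have "p \<in> cell \<beta> d"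
    using fmap_expansion_mem_cell[OF assms(1) ds(1,2)] by simp
  then show ?case
    using cell_Int_Hset by auto
next
  case (Suc n)
  obtain d s where ds: "d \<le> 2" "s \<in> expansions \<beta>" "p = fmap \<beta> d s"
    using expansions_cases[OF assms(1) Suc.prems] .
  show ?case
  proof
    assume "p \<in> (fmap \<beta> i ^^ Suc n) ` Hset \<beta>"
    then obtain h0 where "h0 \<in> Hset \<beta>" "p = fmap \<beta> i ((fmap \<beta> i ^^ n) h0)"
      by auto
    then obtain h where h: "h \<in> (fmap \<beta> i ^^ n) ` Hset \<beta>" "p = fmap \<beta> i h"
      by blast
    show False
    proof (cases "d = i")
      case True
      then have "s = h"
        using ds(3) h(2) fmap_inj[of \<beta> i] assms(1) by (auto dest: injD)
      then show False
        using Suc.IH[OF ds(2)] h(1) by simp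
    next
      case False
      have "h \<in> hole_basin \<beta> i"
        using h(1) Hset_subset_hole_basin funpow_fmap_hole_basin[OF assms(1,2)] by blast
      then have "p \<notin> cell \<beta> d"
        using fmap_hole_basin_notin_cell[OF assms(1,2) ds(1) assms(2)] False h(2) by blast
      then show False
        using fmap_expansion_mem_cell[OF assms(1) ds(1,2)] ds(3) by simp
    qed
  qed
qed

lemma fmap_expansion_eq_fmap_Hset_orbit:
  assumes "\<beta> > 1" "d \<le> 2" "j \<le> 2" "k \<le> 2" "s \<in> expansions \<beta>"
    and "h \<in> (fmap \<beta> j ^^ n) ` Hset \<beta>" "fmap \<beta> d s = fmap \<beta> k h"
  shows "k \<noteq> d" "j = d"
proof -
  show "k \<noteq> d"
  proof
    assume "k = d"
    then have "s = h"
      using assms(1,7) fmap_inj[of \<beta> d] by (auto dest: injD)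
    then show False
      using expansions_notin_Hset_orbit[OF assms(1,3,5)] assms(6) by simp
  qed
  have "h \<in> hole_basin \<beta> j"
    using assms(6) Hset_subset_hole_basin funpow_fmap_hole_basin[OF assms(1,3)] by blast
  then show "j = d"
    using fmap_hole_basin_notin_cell[OF assms(1,3,2,4) _ \<open>k \<noteq> d\<close>]
      fmap_expansion_mem_cell[OF assms(1,2,5)] assms(7) by fastforce
qed

lemma cell_Int_Et: "j \<noteq> d \<Longrightarrow> d \<le> 2 \<Longrightarrow> j \<le> 2 \<Longrightarrow> cell \<beta> d \<inter> Et \<beta> j = {}"
  by (auto simp: cell_def Et_def split: if_splits)

lemma fmap_expansion_notin_Eset:
  assumes "\<beta> > 1" "d \<le> 2" "j \<le> 2" "j \<noteq> d" "s \<in> expansions \<beta>"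
  shows "fmap \<beta> d s \<notin> Eset \<beta> j"
proof
  assume "fmap \<beta> d s \<in> Eset \<beta> j"
  then consider "fmap \<beta> d s \<in> Et \<beta> j"
    | k n h where "k \<in> {0, 1, 2}" "h \<in> (fmap \<beta> j ^^ n) ` Hset \<beta>" "fmap \<beta> d s = fmap \<beta> k h"
    unfolding Eset_def by blast
  then show False
  proof cases
    case 1
    then show False
      using cell_Int_Et[OF assms(4,2,3)] fmap_expansion_mem_cell[OF assms(1,2,5)] by blast
  next
    case (2 k n h)
    then have "k \<le> 2"
      by auto
    then show False
      using fmap_expansion_eq_fmap_Hset_orbit(2)[OF assms(1-3) _ assms(5) 2(2,3)] assms(4) by blast
  qed
qed

definition switch_pairs :: "(nat \<times> nat) set" where
  "switch_pairs = {(0, 1), (1, 2), (0, 2)}"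

lemma cell_minus_Hset_cases:
  assumes "d \<le> 2" "p \<in> cell \<beta> d" "p \<notin> Hset \<beta>"
  shows "p \<in> Et \<beta> d \<or> (\<exists>(i, j)\<in>switch_pairs. d \<in> {i, j} \<and> p \<in> Ct \<beta> i j)"
proof -
  obtain x y where p: "p = (x, y)"
    by fastforce
  consider "d = 0" | "d = 1" | "d = 2"
    using assms(1) by linarith
  then show ?thesis
    using assms(2,3) by cases (auto simp: p cell_def Et_def Ct_def Hset_def switch_pairs_def)
qed

lemma fmap_expansion_mem_Eset:
  assumes "\<beta> > 1" "d \<le> 2" "s \<in> expansions \<beta>"
    and "fmap \<beta> d s \<in> Et \<beta> d
      \<or> (\<exists>k m n. k \<le> 2 \<and> m \<le> 2 \<and> n \<ge> 1 \<and> fmap \<beta> d s \<in> fmap \<beta> k ` (fmap \<beta> m ^^ n) ` Hset \<beta>)"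
  shows "fmap \<beta> d s \<in> Eset \<beta> d"
proof -
  define w where "w = fmap \<beta> d s"
  have no_orbit: "w \<notin> (\<Union>n. (fmap \<beta> d ^^ n) ` Hset \<beta>)"
    using expansions_notin_Hset_orbit[OF assms(1,2)] fmap_expansions[OF assms(1-3)] by (simp add: w_def)
  consider "w \<in> Et \<beta> d"
    | k m n h where "k \<le> 2" "m \<le> 2" "n \<ge> 1" "h \<in> (fmap \<beta> m ^^ n) ` Hset \<beta>" "w = fmap \<beta> k h"
    using assms(4) unfolding w_def by blast
  then show ?thesis
  proof cases
    case 1
    then show ?thesis
      unfolding Eset_def w_def[symmetric] by (rule DiffI[OF UnI1 no_orbit])
  next
    case (2 k m n h)
    then have "k \<noteq> d" "m = d"
      using fmap_expansion_eq_fmap_Hset_orbit[OF assms(1,2) 2(2,1) assms(3)] by (auto simp: w_def)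
    moreover have "k \<in> {0, 1, 2} - {d}"
      using 2(1) \<open>k \<noteq> d\<close> by auto
    ultimately have "w \<in> (\<Union>k'\<in>{0, 1, 2} - {d}. \<Union>n'\<in>{1..}. fmap \<beta> k' ` (fmap \<beta> d ^^ n') ` Hset \<beta>)"
      using 2(3-5) by blast
    then show ?thesis
      unfolding Eset_def w_def[symmetric] by (rule DiffI[OF UnI2 no_orbit])
  qed
qed

lemma fmap_expansion_Eset_or_Cset:
  assumes "\<beta> > 1" "d \<le> 2" "s \<in> expansions \<beta>"
  shows "fmap \<beta> d s \<in> Eset \<beta> d
    \<or> (\<exists>(i, j)\<in>switch_pairs. d \<in> {i, j} \<and> fmap \<beta> d s \<in> Cset \<beta> i j)"
proof -
  have "fmap \<beta> d s \<in> cell \<beta> d" "fmap \<beta> d s \<notin> Hset \<beta>"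
    using fmap_expansion_mem_cell[OF assms] cell_Int_Hset by auto
  then consider "fmap \<beta> d s \<in> Et \<beta> d"
    | i j where "(i, j) \<in> switch_pairs" "d \<in> {i, j}" "fmap \<beta> d s \<in> Ct \<beta> i j"
    using cell_minus_Hset_cases[OF assms(2)] by blast
  then show ?thesis
  proof cases
    case 1
    then show ?thesis
      using fmap_expansion_mem_Eset[OF assms] by blast
  next
    case (2 i j)
    have "i \<le> 2" "j \<le> 2"
      using 2(1) by (auto simp: switch_pairs_def)
    show ?thesis
    proof (cases "fmap \<beta> d s \<in> Cset \<beta> i j")
      case True
      then show ?thesis
        using 2 by auto
    next
      case False
      then obtain n where "n \<ge> 1" "fmap \<beta> d s \<in> fmap \<beta> i ` (fmap \<beta> j ^^ n) ` Hset \<beta>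
          \<or> fmap \<beta> d s \<in> fmap \<beta> j ` (fmap \<beta> i ^^ n) ` Hset \<beta>"
        using 2(3) unfolding Cset_def by blast
      then show ?thesis
        using fmap_expansion_mem_Eset[OF assms] \<open>i \<le> 2\<close> \<open>j \<le> 2\<close> by blast
    qed
  qed
qed

lemma Ct_disjoint:
  assumes "\<beta> > 3 / 2" "(i, j) \<in> switch_pairs" "(i', j') \<in> switch_pairs"
    "p \<in> Ct \<beta> i j" "p \<in> Ct \<beta> i' j'"
  shows "(i, j) = (i', j')"
proof (rule ccontr)
  assume "(i, j) \<noteq> (i', j')"
  then have "1 / \<beta> \<le> fst p \<and> 1 / \<beta> \<le> snd p \<and> fst p + snd p \<le> 1 / (\<beta> * (\<beta> - 1))"
    using assms(2-5) by (auto simp: Ct_def switch_pairs_def)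
  moreover have "1 / (\<beta> * (\<beta> - 1)) < 1 / \<beta> + 1 / \<beta>"
    using assms(1) by (simp add: field_simps)
  ultimately show False
    by linarith
qed

lemma Kstep_Eset:
  assumes "d \<le> 2" "w \<in> Eset \<beta> d" "\<And>j. j \<le> 2 \<Longrightarrow> j \<noteq> d \<Longrightarrow> w \<notin> Eset \<beta> j"
  shows "Kstep \<beta> (\<omega>, w) = (qv d, \<omega>, \<beta> *\<^sub>R w - qv d)"
proof -
  consider "d = 0" | "d = 1" | "d = 2"
    using assms(1) by linarith
  then show ?thesis
    using assms(2) assms(3)[of 0] assms(3)[of 1] by cases (simp_all add: Kstep_def)
qed

lemma Kstep_Cset:
  assumes "\<beta> > 3 / 2" "(i, j) \<in> switch_pairs" "w \<in> Cset \<beta> i j"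
    "w \<notin> Eset \<beta> 0 \<union> Eset \<beta> 1 \<union> Eset \<beta> 2"
  shows "Kstep \<beta> (\<omega>, w) = (let e = qv (if \<omega> 0 then j else i) in (e, shift \<omega>, \<beta> *\<^sub>R w - e))"
proof -
  have other: "w \<notin> Cset \<beta> i' j'" if "(i', j') \<in> switch_pairs" "(i', j') \<noteq> (i, j)" for i' j'
    using Ct_disjoint[OF assms(1,2) that(1)] assms(3) that(2) unfolding Cset_def by blast
  have E: "w \<notin> Eset \<beta> 0" "w \<notin> Eset \<beta> 1" "w \<notin> Eset \<beta> 2"
    using assms(4) by simp_all
  have "(0, 1) \<in> switch_pairs" "(1, 2) \<in> switch_pairs"
    by (simp_all add: switch_pairs_def)
  note other = other[OF this(1)] other[OF this(2)]
  consider "(i, j) = (0, 1)" | "(i, j) = (1, 2)" | "(i, j) = (0, 2)"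
    using assms(2) unfolding switch_pairs_def by blast
  then show ?thesis
  proof cases
    case 1
    then show ?thesis
      using assms(3) E unfolding Kstep_def by simp
  next
    case 2
    then show ?thesis
      using assms(3) E other(1) unfolding Kstep_def by simp
  next
    case 3
    then show ?thesis
      using assms(3) E other unfolding Kstep_def by simp
  qed
qed

lemma Kstep_fmap_expansion:
  assumes "\<beta> > 3 / 2" "d \<le> 2" "s \<in> expansions \<beta>"
  shows "\<exists>b. \<forall>\<omega>. (fmap \<beta> d s \<notin> Eset \<beta> 0 \<union> Eset \<beta> 1 \<union> Eset \<beta> 2 \<longrightarrow> \<omega> 0 = b) \<longrightarrow>
    Kstep \<beta> (\<omega>, fmap \<beta> d s) =
      (qv d, if fmap \<beta> d s \<in> Eset \<beta> 0 \<union> Eset \<beta> 1 \<union> Eset \<beta> 2 then \<omega> else shift \<omega>, s)"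
proof -
  have \<beta>: "\<beta> > 1"
    using assms(1) by simp
  define w where "w = fmap \<beta> d s"
  have descale: "\<beta> *\<^sub>R w - qv d = s"
    using \<beta> scaleR_fmap_minus_qv by (simp add: w_def)
  have others: "w \<notin> Eset \<beta> j" if "j \<le> 2" "j \<noteq> d" for j
    using fmap_expansion_notin_Eset[OF \<beta> assms(2) that assms(3)] by (simp add: w_def)
  show ?thesis
  proof (cases "w \<in> Eset \<beta> 0 \<union> Eset \<beta> 1 \<union> Eset \<beta> 2")
    case True
    then have "w \<in> Eset \<beta> d"
      using others[of 0] others[of 1] others[of 2] le_2_cases[OF assms(2)] by auto
    then have "Kstep \<beta> (\<omega>, w) = (qv d, \<omega>, s)" for \<omega>
      using Kstep_Eset[OF assms(2) _ others] descale by simp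
    then show ?thesis
      using True by (simp add: w_def)
  next
    case False
    then obtain i j where ij: "(i, j) \<in> switch_pairs" "d \<in> {i, j}" "w \<in> Cset \<beta> i j"
      using fmap_expansion_Eset_or_Cset[OF \<beta> assms(2,3)] le_2_cases[OF assms(2)]
      by (auto simp: w_def)
    have "Kstep \<beta> (\<omega>, w) = (qv d, shift \<omega>, s)" if "\<omega> 0 = (d = j)" for \<omega>
    proof -
      have "(if \<omega> 0 then j else i) = d"
        using ij(1,2) that by (auto simp: switch_pairs_def)
      then show ?thesis
        using Kstep_Cset[OF assms(1) ij(1,3) False] descale by (simp add: Let_def)
    qed
    then show ?thesis
      using False by (intro exI[of _ "d = j"]) (simp add: w_def)
  qed
qed

lemma card_filter_less_Suc:
  "card {k. k < Suc n \<and> P k} = card {k. k < n \<and> P k} + (if P n then 1 else 0)"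
proof -
  have "{k. k < Suc n \<and> P k} = (if P n then insert n {k. k < n \<and> P k} else {k. k < n \<and> P k})"
    by (auto simp: less_Suc_eq)
  then show ?thesis
    by simp
qed

lemma ex_bits_at_counts:
  fixes P b :: "nat \<Rightarrow> bool"
  shows "\<exists>\<omega>. \<forall>n. P n \<longrightarrow> \<omega> (card {k. k < n \<and> P k}) = b n"
proof -
  define c where "c n = card {k. k < n \<and> P k}" for n
  have less: "c n < c m" if "P n" "n < m" for n m
    unfolding c_def using that by (intro psubset_card_mono) auto
  have "inj_on c {n. P n}"
  proof (rule inj_onI)
    fix n m
    assume "n \<in> {n. P n}" "m \<in> {n. P n}" "c n = c m"
    then show "n = m"
      using less[of n m] less[of m n] by (cases n m rule: linorder_cases) auto
  qed
  then have "\<forall>n. P n \<longrightarrow> b (inv_into {n. P n} c (c n)) = b n"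
    by simp
  then show ?thesis
    by (intro exI[of _ "\<lambda>m. b (inv_into {n. P n} c m)"]) (simp add: c_def)
qed

lemma funpow_shift: "(shift ^^ k) \<omega> = (\<lambda>i. \<omega> (k + i))"
  by (induction k) (auto simp: shift_def)

lemma Kbeta_orbit_by_bits:
  assumes "\<And>n. \<exists>b. \<forall>\<omega>. (\<not> deterministic n \<longrightarrow> \<omega> 0 = b) \<longrightarrow>
      Kstep \<beta> (\<omega>, zs n) = (e n, if deterministic n then \<omega> else shift \<omega>, zs (Suc n))"
  shows "\<exists>\<omega>. \<forall>n. fst (Kstep \<beta> ((Kbeta \<beta> ^^ n) (\<omega>, zs 0))) = e n"
proof -
  have "\<forall>n. \<exists>b. \<forall>\<omega>. (\<not> deterministic n \<longrightarrow> \<omega> 0 = b) \<longrightarrow>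
      Kstep \<beta> (\<omega>, zs n) = (e n, if deterministic n then \<omega> else shift \<omega>, zs (Suc n))"
    by (rule allI) (rule assms)
  then obtain b where b: "\<forall>n \<omega>. (\<not> deterministic n \<longrightarrow> \<omega> 0 = b n) \<longrightarrow>
      Kstep \<beta> (\<omega>, zs n) = (e n, if deterministic n then \<omega> else shift \<omega>, zs (Suc n))"
    by (rule choice[THEN exE])
  define used where "used n = card {k. k < n \<and> \<not> deterministic k}" for n
  obtain \<omega> where \<omega>: "\<And>n. \<not> deterministic n \<Longrightarrow> \<omega> (used n) = b n"
    using ex_bits_at_counts[of "\<lambda>n. \<not> deterministic n" b] unfolding used_def by blast
  have step: "Kstep \<beta> ((shift ^^ used n) \<omega>, zs n) = (e n, (shift ^^ used (Suc n)) \<omega>, zs (Suc n))"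
    for n
  proof -
    have "(shift ^^ used (Suc n)) \<omega> =
        (if deterministic n then (shift ^^ used n) \<omega> else shift ((shift ^^ used n) \<omega>))"
      using card_filter_less_Suc[of n "\<lambda>k. \<not> deterministic k"] by (simp add: used_def)
    then show ?thesis
      using b \<omega>[of n] by (simp add: funpow_shift)
  qed
  have orbit: "(Kbeta \<beta> ^^ n) (\<omega>, zs 0) = ((shift ^^ used n) \<omega>, zs n)" for n
  proof (induction n)
    case 0
    then show ?case
      by (simp add: used_def)
  next
    case (Suc n)
    then show ?case
      by (simp add: Kbeta_def step)
  qed
  then have "fst (Kstep \<beta> ((Kbeta \<beta> ^^ n) (\<omega>, zs 0))) = e n" for n
    using step by simp
  then show ?thesis
    by blast
qed

lemma Kbeta_orbit_expansion:
  assumes "\<beta> > 3 / 2" "\<forall>n. dg n \<le> 2"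
  shows "\<exists>\<omega>. \<forall>n. fst (Kstep \<beta> ((Kbeta \<beta> ^^ n) (\<omega>, expansion \<beta> dg))) = qv (dg n)"
proof -
  define zs where "zs n = expansion \<beta> (\<lambda>i. dg (n + i))" for n
  have zs_Suc: "zs n = fmap \<beta> (dg n) (zs (Suc n))" for n
    using expansion_Suc[of \<beta> "\<lambda>i. dg (n + i)"] assms(1) by (simp add: zs_def)
  have zs_mem: "zs n \<in> expansions \<beta>" for n
    using assms(2) by (auto simp: zs_def expansions_def)
  have "\<exists>b. \<forall>\<omega>. (zs n \<notin> Eset \<beta> 0 \<union> Eset \<beta> 1 \<union> Eset \<beta> 2 \<longrightarrow> \<omega> 0 = b) \<longrightarrow>
      Kstep \<beta> (\<omega>, zs n) =
        (qv (dg n), if zs n \<in> Eset \<beta> 0 \<union> Eset \<beta> 1 \<union> Eset \<beta> 2 then \<omega> else shift \<omega>, zs (Suc n))"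
    for n
    using Kstep_fmap_expansion[OF assms(1) _ zs_mem, of "dg n" "Suc n"] assms(2)
    unfolding zs_Suc[of n, symmetric] by blast
  then have "\<exists>\<omega>. \<forall>n. fst (Kstep \<beta> ((Kbeta \<beta> ^^ n) (\<omega>, zs 0))) = qv (dg n)"
    by (rule Kbeta_orbit_by_bits[where
          deterministic = "\<lambda>n. zs n \<in> Eset \<beta> 0 \<union> Eset \<beta> 1 \<union> Eset \<beta> 2"])
  then show ?thesis
    by (simp add: zs_def)
qed

theorem theorem6p6:
  fixes \<beta> :: real and z :: pt and a :: "nat \<Rightarrow> pt"
  assumes "3 / 2 < \<beta>" and "\<beta> \<le> beta_star"
    and "z \<in> Sbeta \<beta>"
    and "\<forall>i\<ge>1. a i \<in> {qv 0, qv 1, qv 2}"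
    and "(\<lambda>i. (1 / \<beta>) ^ (Suc i) *\<^sub>R a (Suc i)) sums z"
  shows "\<exists>\<omega> :: nat \<Rightarrow> bool. \<forall>i\<ge>1. a i = digit \<beta> i \<omega> z"
proof -
  define dg where "dg n = (if a (Suc n) = qv 1 then 1 else if a (Suc n) = qv 2 then 2 else 0 :: nat)"
    for n
  have dg: "\<forall>n. dg n \<le> 2" "\<And>n. a (Suc n) = qv (dg n)"
    using assms(4) by (auto simp: dg_def)
  have "z = expansion \<beta> dg"
    using assms(1,5) expansion_sums[of \<beta> dg] by (simp add: dg(2) sums_unique2)
  then obtain \<omega> where \<omega>: "\<And>n. fst (Kstep \<beta> ((Kbeta \<beta> ^^ n) (\<omega>, z))) = qv (dg n)"
    using Kbeta_orbit_expansion[OF assms(1) dg(1)] by auto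
  have "a i = digit \<beta> i \<omega> z" if "i \<ge> 1" for i
    using \<omega>[of "i - 1"] dg(2)[of "i - 1"] that by (simp add: digit_def)
  then show ?thesis
    by blast
qed

end
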